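(* For any random vector $\vec{x}=(\vec{x}(0),\dots,\vec{x}(k-1))$ of real random variables with finite expectations (not necessarily independent), $$\mathbb{E}\Big[\max_{j<k}\vec{x}(j)\Big]-\max_{j<k}\mathbb{E}[\vec{x}(j)]\le\frac12\sum_{j<k}\sqrt{\mathrm{Var}(\vec{x}(j))}.$$ *)

theory Defs
  imports "HOL-Probability.Probability"
begin

end

theory Submission
  imports Defs
begin

text \<open>With \<open>\<mu> j\<close> the mean of \<open>x j\<close>, pointwise
  \<open>max\<^sub>j x j \<le> max\<^sub>j \<mu> j + \<Sum>\<^sub>j (x j - \<mu> j)\<^sup>+\<close>, since the first maximum is attained at some \<open>j\<close>.
  A centred variable \<open>Y\<close> has \<open>Y\<^sup>+ = (Y + \<bar>Y\<bar>) / 2\<close>, so \<open>E Y\<^sup>+ = E \<bar>Y\<bar> / 2\<close>, and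
  \<open>E \<bar>Y\<bar> \<le> sqrt (E Y\<^sup>2)\<close> because \<open>\<bar>Y\<bar>\<close> has nonnegative variance.\<close>

lemma Max_le_Max_plus_sum_pos_part:
  fixes x \<mu> :: "'i \<Rightarrow> 'b::linordered_ab_group_add"
  assumes "finite I" "I \<noteq> {}"
  shows "Max (x ` I) \<le> Max (\<mu> ` I) + (\<Sum>j\<in>I. max 0 (x j - \<mu> j))"
proof -
  have "Max (x ` I) \<in> x ` I"
    using assms by (intro Max_in) auto
  then obtain j where j: "j \<in> I" "Max (x ` I) = x j"
    by blast
  have "x j \<le> \<mu> j + max 0 (x j - \<mu> j)"
    by (metis add.commute diff_le_eq max.cobounded2)
  also have "\<dots> \<le> Max (\<mu> ` I) + (\<Sum>j\<in>I. max 0 (x j - \<mu> j))"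
  proof (rule add_mono)
    show "\<mu> j \<le> Max (\<mu> ` I)"
      using j assms by simp
    show "max 0 (x j - \<mu> j) \<le> (\<Sum>j\<in>I. max 0 (x j - \<mu> j))"
      by (rule sum_nonneg_leq_bound[OF assms(1) _ refl j(1)]) simp
  qed
  finally show ?thesis
    using j by simp
qed

lemma integrable_Max:
  fixes f :: "'i \<Rightarrow> 'a \<Rightarrow> real"
  assumes "finite I" "I \<noteq> {}" "\<And>i. i \<in> I \<Longrightarrow> integrable M (f i)"
  shows "integrable M (\<lambda>x. Max ((\<lambda>i. f i x) ` I))"
  using assms
proof (induction I rule: finite_ne_induct)
  case (insert i I)
  then show ?case
    by (simp add: Max_insert)
qed simp

lemma integrable_square_diff_const:
  fixes X :: "'a \<Rightarrow> real"
  assumes "integrable M X" "integrable M (\<lambda>x. (X x)\<^sup>2)" "finite_measure M"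
  shows "integrable M (\<lambda>x. (X x - c)\<^sup>2)"
proof -
  have "(\<lambda>x. (X x - c)\<^sup>2) = (\<lambda>x. (X x)\<^sup>2 - 2 * c * X x + c\<^sup>2)"
    by (simp add: power2_diff algebra_simps)
  then show ?thesis
    using assms by (simp add: finite_measure.integrable_const)
qed

context prob_space
begin

lemma expectation_abs_le_sqrt_expectation_square:
  fixes Y :: "'a \<Rightarrow> real"
  assumes "integrable M Y" "integrable M (\<lambda>x. (Y x)\<^sup>2)"
  shows "expectation (\<lambda>x. \<bar>Y x\<bar>) \<le> sqrt (expectation (\<lambda>x. (Y x)\<^sup>2))"
proof -
  have "0 \<le> variance (\<lambda>x. \<bar>Y x\<bar>)"
    by (rule variance_positive)
  also have "\<dots> = expectation (\<lambda>x. (Y x)\<^sup>2) - (expectation (\<lambda>x. \<bar>Y x\<bar>))\<^sup>2"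
    using assms by (subst variance_eq) auto
  finally show ?thesis
    by (intro real_le_rsqrt) simp
qed

lemma expectation_pos_part_centered:
  fixes X :: "'a \<Rightarrow> real"
  assumes "integrable M X"
  shows "expectation (\<lambda>x. max 0 (X x - expectation X))
           = expectation (\<lambda>x. \<bar>X x - expectation X\<bar>) / 2"
proof -
  let ?Y = "\<lambda>x. X x - expectation X"
  have "(\<lambda>x. max 0 (?Y x)) = (\<lambda>x. (?Y x + \<bar>?Y x\<bar>) / 2)"
    by (auto simp: max_def)
  moreover have "expectation ?Y = 0"
    using assms by (simp add: prob_space)
  ultimately show ?thesis
    using assms by simp
qed

lemma expectation_pos_part_centered_le_sqrt_variance:
  fixes X :: "'a \<Rightarrow> real"
  assumes "integrable M X" "integrable M (\<lambda>x. (X x)\<^sup>2)"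
  shows "expectation (\<lambda>x. max 0 (X x - expectation X)) \<le> sqrt (variance X) / 2"
  using expectation_abs_le_sqrt_expectation_square[of "\<lambda>x. X x - expectation X"]
    integrable_square_diff_const[OF assms finite_measure]
  by (simp add: expectation_pos_part_centered assms)

lemma expectation_Max_le_Max_expectation_plus_sqrt_variance:
  fixes X :: "'i \<Rightarrow> 'a \<Rightarrow> real"
  assumes "finite I" "I \<noteq> {}"
    and "\<And>j. j \<in> I \<Longrightarrow> integrable M (X j)"
    and "\<And>j. j \<in> I \<Longrightarrow> integrable M (\<lambda>x. (X j x)\<^sup>2)"
  shows "expectation (\<lambda>x. Max ((\<lambda>j. X j x) ` I)) - Max ((\<lambda>j. expectation (X j)) ` I)
           \<le> (1/2) * (\<Sum>j\<in>I. sqrt (variance (X j)))"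
proof -
  let ?m = "Max ((\<lambda>j. expectation (X j)) ` I)"
  let ?excess = "\<lambda>j x. max 0 (X j x - expectation (X j))"
  have "expectation (\<lambda>x. Max ((\<lambda>j. X j x) ` I))
          \<le> expectation (\<lambda>x. ?m + (\<Sum>j\<in>I. ?excess j x))"
    using assms
      Max_le_Max_plus_sum_pos_part[OF assms(1,2), of "\<lambda>j. X j _" "\<lambda>j. expectation (X j)"]
    by (intro integral_mono integrable_Max) auto
  also have "\<dots> = ?m + (\<Sum>j\<in>I. expectation (?excess j))"
    using assms by (simp add: prob_space)
  also have "\<dots> \<le> ?m + (\<Sum>j\<in>I. sqrt (variance (X j)) / 2)"
    using assms by (intro add_left_mono sum_mono expectation_pos_part_centered_le_sqrt_variance)
  finally show ?thesis
    by (simp add: sum_divide_distrib)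
qed

end

theorem lemma3p5:
  fixes M :: "'a measure" and X :: "nat \<Rightarrow> 'a \<Rightarrow> real" and k :: nat
  assumes "prob_space M"
    and "k \<ge> 1"
    and "\<And>j. j < k \<Longrightarrow> X j \<in> borel_measurable M"
    and "\<And>j. j < k \<Longrightarrow> integrable M (X j)"
    and "\<And>j. j < k \<Longrightarrow> integrable M (\<lambda>\<omega>. (X j \<omega>)\<^sup>2)"
  shows "(\<integral>\<omega>. Max ((\<lambda>j. X j \<omega>) ` {..<k}) \<partial>M)
           - Max ((\<lambda>j. prob_space.expectation M (X j)) ` {..<k})
         \<le> (1/2) * (\<Sum>j<k. sqrt (prob_space.variance M (X j)))"
  using assms
  by (intro prob_space.expectation_Max_le_Max_expectation_plus_sqrt_variance)
    (auto simp: lessThan_empty_iff)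

end
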